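(* Let $\mathbb{X}\subset\mathbb{R}^{d_{\mathbb{X}}}$ and $\mathbb{S}\subset\mathbb{R}^{d_{\mathbb{S}}}$ be bounded sets, $\mathbb{U}=\mathbb{X}\times\mathbb{S}$, let $\mathbb{P}_S$ be a probability distribution on $\mathbb{S}$, let $C\subset\mathbb{R}^q$ and $\alpha\in(0,1)$. For a function $g:\mathbb{U}\to\mathbb{R}^q$ define the quantile set $$\Gamma(g)=\Big\{x\in\mathbb{X}:\int_{\mathbb{S}}\mathbb{1}_C(g(x,s))\,\mathrm{d}\mathbb{P}_S(s)\le\alpha\Big\}.$$ Let $\xi$ be a Gaussian process prior on $\mathbb{U}$ with mean $\mu$ and covariance $k$, observed sequentially at points $U_i\in\mathbb{U}$ through $Z_i^{obs}=\xi(U_i)+\epsilon_i$ with $\epsilon_i\sim\mathcal{N}(0,\Sigma)$ i.i.d. Let $\mathcal{I}_n$ denote the information (initial data plus $(U_1,Z_1^{obs}),\dots,(U_n,Z_n^{obs})$), $\mathbb{P}_n$, $\mathbb{E}_n$ the conditional probability and expectation given $\mathcal{I}_n$, and $\pi_n(x)=\mathbb{P}_n(x\in\Gamma(\xi))$. Fix a batch size $r\ge1$ and set $$\mathcal{H}_{n+r}=\int_{\mathbb{X}}\min(\pi_{n+r}(x),1-\pi_{n+r}(x))\,\mathrm{d}x,\qquad J_n(u_{n+1},\dots,u_{n+r})=\mathbb{E}_n\big(\mathcal{H}_{n+r}\,\big|\,U_{n+i}=u_{n+i},\ i=1,\dots,r\big).$$ Let $\Gamma^{\mathrm{B}}_n=\{x\in\mathbb{X}:\pi_n(x)>1/2\}$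 and let $A\,\Delta\,B=(A\setminus B)\cup(B\setminus A)$ denote the symmetric difference. Then $$\underset{u\in\mathbb{U}^r}{\arg\min}\,J_n(u)=\underset{u\in\mathbb{U}^r}{\arg\max}\,G_n(u),$$ where $$G_n(u)=\int_{\mathbb{X}}\mathbb{E}_n\Big(|2\pi_{n+r}(x)-1|\cdot\mathbb{1}_{\Gamma^{\mathrm{B}}_{n+r}\,\Delta\,\Gamma^{\mathrm{B}}_n}(x)\,\Big|\,U_{n+i}=u_{n+i},\ i=1,\dots,r\Big)\,\mathrm{d}x.$$
   Context: Here $u=(u_{n+1},\dots,u_{n+r})$; $\pi_{n+r}$ and $\Gamma^{\mathrm{B}}_{n+r}$ are the corresponding quantities computed from the information $\mathcal{I}_{n+r}$ obtained after observing the batch at $U_{n+1},\dots,U_{n+r}$. The integrals over $\mathbb{X}$ are with respect to Lebesgue measure. The noise covariance $\Sigma$ is a $q\times q$ matrix (possibly zero), and the GP parameters and $\Sigma$ are assumed known. *)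

theory Defs
  imports "HOL-Probability.Probability"
begin

definition gaussian_real :: "'a measure \<Rightarrow> ('a \<Rightarrow> real) \<Rightarrow> real \<Rightarrow> real \<Rightarrow> bool" where
  "gaussian_real M Y mu v \<longleftrightarrow>
     Y \<in> borel_measurable M \<and> 0 \<le> v \<and>
     (if v = 0 then (AE \<omega> in M. Y \<omega> = mu)
      else distributed M lborel Y (normal_density mu (sqrt v)))"

definition gaussian_process ::
  "'a measure \<Rightarrow> ('a \<Rightarrow> 'i \<Rightarrow> real^'q) \<Rightarrow> 'i set \<Rightarrow> ('i \<Rightarrow> real^'q)
     \<Rightarrow> ('i \<Rightarrow> 'i \<Rightarrow> real^'q^'q) \<Rightarrow> bool" where
  "gaussian_process M Y T m K \<longleftrightarrow>
     (\<forall>(N::nat) (t::nat \<Rightarrow> 'i) (a::nat \<Rightarrow> real^'q). (\<forall>i<N. t i \<in> T) \<longrightarrow>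
        gaussian_real M (\<lambda>\<omega>. \<Sum>i<N. a i \<bullet> Y \<omega> (t i))
          (\<Sum>i<N. a i \<bullet> m (t i))
          (\<Sum>i<N. \<Sum>j<N. a i \<bullet> (K (t i) (t j) *v a j)))"

text \<open>Field xi augmented by the batch noises eps 0, ..., eps (r-1).\<close>
definition aug_field :: "('a \<Rightarrow> 'u \<Rightarrow> real^'q) \<Rightarrow> (nat \<Rightarrow> 'a \<Rightarrow> real^'q) \<Rightarrow> 'a \<Rightarrow> 'u + nat \<Rightarrow> real^'q" where
  "aug_field \<xi> \<epsilon> \<omega> i = (case i of Inl t \<Rightarrow> \<xi> \<omega> t | Inr j \<Rightarrow> \<epsilon> j \<omega>)"

definition aug_mean :: "('u \<Rightarrow> real^'q) \<Rightarrow> 'u + nat \<Rightarrow> real^'q" where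
  "aug_mean m i = (case i of Inl t \<Rightarrow> m t | Inr j \<Rightarrow> 0)"

text \<open>Noises are i.i.d. N(0, Sigma) and independent of xi (zero cross covariance).\<close>
definition aug_cov :: "('u \<Rightarrow> 'u \<Rightarrow> real^'q^'q) \<Rightarrow> real^'q^'q \<Rightarrow> 'u + nat \<Rightarrow> 'u + nat \<Rightarrow> real^'q^'q" where
  "aug_cov k \<Sigma> i i' = (case (i, i') of
      (Inl t, Inl t') \<Rightarrow> k t t'
    | (Inr a, Inr b) \<Rightarrow> (if a = b then \<Sigma> else 0)
    | _ \<Rightarrow> 0)"

definition quantile_set ::
  "('x::euclidean_space) set \<Rightarrow> ('s::euclidean_space) measure \<Rightarrow> (real^'q) set \<Rightarrow> real
     \<Rightarrow> ('x \<times> 's \<Rightarrow> real^'q) \<Rightarrow> 'x set" where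
  "quantile_set X PS C \<alpha> g = {x \<in> X. (\<integral>s. indicator C (g (x, s)) \<partial>PS) \<le> \<alpha>}"

definition obs_algebra ::
  "'a measure \<Rightarrow> ('a \<Rightarrow> 'u \<Rightarrow> real^'q) \<Rightarrow> (nat \<Rightarrow> 'a \<Rightarrow> real^'q) \<Rightarrow> nat \<Rightarrow> (nat \<Rightarrow> 'u) \<Rightarrow> 'a measure" where
  "obs_algebra M \<xi> \<epsilon> r u =
     vimage_algebra (space M) (\<lambda>\<omega>. \<lambda>j\<in>{..<r}. \<xi> \<omega> (u j) + \<epsilon> j \<omega>) (PiM {..<r} (\<lambda>_. borel))"

definition symdiff :: "'x set \<Rightarrow> 'x set \<Rightarrow> 'x set" where
  "symdiff A B = (A - B) \<union> (B - A)"

definition argmin_set :: "('b \<Rightarrow> real) \<Rightarrow> 'b set \<Rightarrow> 'b set" where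
  "argmin_set f A = {u \<in> A. \<forall>v\<in>A. f u \<le> f v}"

definition argmax_set :: "('b \<Rightarrow> real) \<Rightarrow> 'b set \<Rightarrow> 'b set" where
  "argmax_set f A = {u \<in> A. \<forall>v\<in>A. f v \<le> f u}"

end

theory Submission
  imports Defs
begin

text \<open>Fix \<open>x\<close> and write \<open>p = \<pi>\<^sub>n\<^sub>+\<^sub>r(x)\<close>, \<open>q = \<pi>\<^sub>n(x)\<close>. Pointwise,
  \<open>min p (1 - p) + \<bar>2p - 1\<bar> \<cdot> [p and q lie on different sides of 1/2] = 1/2 - s (p - 1/2)\<close>,
  where \<open>s = \<plusminus>1\<close> records the side of \<open>q\<close>. The right-hand side is affine in \<open>p\<close>, and \<open>p\<close> is a
  version of the conditional probability of \<open>x \<in> \<Gamma>(\<xi>)\<close>, so its expectation is \<open>q\<close>. After Fubini,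
  \<open>J\<^sub>n(u) + G\<^sub>n(u) = \<integral>\<^sub>X min \<pi>\<^sub>n (1 - \<pi>\<^sub>n) = H\<^sub>n\<close> does not depend on the batch \<open>u\<close>.
  The Gaussian structure only enters through the measurability of the observations.\<close>

lemma gaussian_process_measurable:
  assumes "gaussian_process M Y T m K" and "t \<in> T"
  shows "(\<lambda>\<omega>. Y \<omega> t) \<in> borel_measurable M"
proof -
  have "(\<lambda>\<omega>. b \<bullet> Y \<omega> t) \<in> borel_measurable M" for b
    using assms(1)[unfolded gaussian_process_def, rule_format, of 1 "\<lambda>_. t" "\<lambda>_. b"] assms(2)
    by (simp add: gaussian_real_def)
  then show ?thesis
    by (subst borel_measurable_euclidean_space) (auto simp: inner_commute)
qed

lemma sigma_finite_subalgebra_obs_algebra: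
  assumes M: "prob_space M"
    and \<xi>: "\<And>j. j < r \<Longrightarrow> (\<lambda>\<omega>. \<xi> \<omega> (u j)) \<in> borel_measurable M"
    and \<epsilon>: "\<And>j. j < r \<Longrightarrow> \<epsilon> j \<in> borel_measurable M"
  shows "sigma_finite_subalgebra M (obs_algebra M \<xi> \<epsilon> r u)"
proof -
  let ?f = "\<lambda>\<omega>. \<lambda>j\<in>{..<r}. \<xi> \<omega> (u j) + \<epsilon> j \<omega>"
  have f_meas: "?f \<in> M \<rightarrow>\<^sub>M PiM {..<r} (\<lambda>_. borel)"
    using \<xi> \<epsilon> by (intro measurable_restrict borel_measurable_add) auto
  have "?f \<in> space M \<rightarrow> space (PiM {..<r} (\<lambda>_. borel))"
    using measurable_space[OF f_meas] by auto
  then have "subalgebra M (obs_algebra M \<xi> \<epsilon> r u)"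
    unfolding subalgebra_def obs_algebra_def
    using f_meas by (auto simp: sets_vimage_algebra2 measurable_sets)
  then show ?thesis
    using M by (intro finite_measure_subalgebra_is_sigma_finite)
      (simp add: finite_measure_subalgebra_def finite_measure_subalgebra_axioms_def
        prob_space.finite_measure)
qed

lemma quantile_set_event_measurable:
  fixes \<xi> :: "'a \<Rightarrow> ('x::euclidean_space) \<times> ('s::euclidean_space) \<Rightarrow> real^'q"
  assumes \<xi>: "(\<lambda>(\<omega>, t). \<xi> \<omega> t) \<in> borel_measurable (M \<Otimes>\<^sub>M restrict_space borel (X \<times> S))"
    and PS: "prob_space PS" "sets PS = sets (restrict_space borel S)"
    and C: "C \<in> sets borel" and x: "x \<in> X"
  shows "{\<omega>\<in>space M. x \<in> quantile_set X PS C \<alpha> (\<xi> \<omega>)} \<in> sets M"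
proof -
  have "(\<lambda>s. (x, s)) \<in> restrict_space borel S \<rightarrow>\<^sub>M restrict_space borel (X \<times> S)"
    using x by (intro measurable_restrict_space3 borel_measurable_continuous_onI continuous_intros)
      auto
  then have "(\<lambda>s. (x, s)) \<in> PS \<rightarrow>\<^sub>M restrict_space borel (X \<times> S)"
    by (simp add: measurable_cong_sets[OF PS(2) refl])
  then have "(\<lambda>(\<omega>, s). (\<omega>, (x, s))) \<in> M \<Otimes>\<^sub>M PS \<rightarrow>\<^sub>M M \<Otimes>\<^sub>M restrict_space borel (X \<times> S)"
    unfolding case_prod_beta by (intro measurable_Pair measurable_fst measurable_compose[OF measurable_snd])
  from measurable_comp[OF this \<xi>]
  have "(\<lambda>(\<omega>, s). \<xi> \<omega> (x, s)) \<in> borel_measurable (M \<Otimes>\<^sub>M PS)"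
    by (simp add: o_def case_prod_beta)
  then have "(\<lambda>(\<omega>, s). indicator C (\<xi> \<omega> (x, s)) :: real) \<in> borel_measurable (M \<Otimes>\<^sub>M PS)"
    using C by measurable
  then have "(\<lambda>\<omega>. \<integral>s. indicator C (\<xi> \<omega> (x, s)) \<partial>PS :: real) \<in> borel_measurable M"
    using PS(1) by (intro sigma_finite_measure.borel_measurable_lebesgue_integral)
      (auto simp: prob_space_imp_sigma_finite)
  then have "{\<omega>\<in>space M. (\<integral>s. indicator C (\<xi> \<omega> (x, s)) \<partial>PS) \<le> \<alpha>} \<in> sets M"
    by measurable
  then show ?thesis
    using x by (simp add: quantile_set_def)
qed

lemma cond_prob_version:
  assumes "sigma_finite_subalgebra M F" and M: "prob_space M"
    and P: "{\<omega>\<in>space M. P \<omega>} \<in> sets M"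
    and p_meas: "p \<in> borel_measurable M"
    and p_version: "AE \<omega> in M. p \<omega> = real_cond_exp M F (\<lambda>\<omega>. if P \<omega> then 1 else 0) \<omega>"
  shows "AE \<omega> in M. 0 \<le> p \<omega> \<and> p \<omega> \<le> 1"
    and "(\<integral>\<omega>. p \<omega> \<partial>M) = measure M {\<omega>\<in>space M. P \<omega>}"
proof -
  interpret sigma_finite_subalgebra M F by fact
  interpret prob_space M by (rule M)
  let ?f = "\<lambda>\<omega>. if P \<omega> then 1 else (0::real)"
  have f_indicator: "?f \<omega> = indicator {\<omega>\<in>space M. P \<omega>} \<omega>" if "\<omega> \<in> space M" for \<omega>
    using that by (simp add: indicator_def)
  have "?f \<in> borel_measurable M"
    using P by (subst measurable_cong[OF f_indicator]) auto
  then have f_int: "integrable M ?f"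
    by (intro integrable_const_bound[where B=1]) auto
  have "AE \<omega> in M. 0 \<le> real_cond_exp M F ?f \<omega>"
    using f_int by (rule real_cond_exp_ge_c) auto
  moreover have "AE \<omega> in M. real_cond_exp M F ?f \<omega> \<le> 1"
    using f_int by (rule real_cond_exp_le_c) auto
  ultimately show "AE \<omega> in M. 0 \<le> p \<omega> \<and> p \<omega> \<le> 1"
    using p_version by eventually_elim auto
  have "(\<integral>\<omega>. p \<omega> \<partial>M) = (\<integral>\<omega>. real_cond_exp M F ?f \<omega> \<partial>M)"
    using p_version by (intro integral_cong_AE p_meas) auto
  also have "\<dots> = (\<integral>\<omega>. ?f \<omega> \<partial>M)"
    using f_int by (rule real_cond_exp_int(2))
  also have "\<dots> = measure M {\<omega>\<in>space M. P \<omega>}"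
    using P by (simp add: Bochner_Integration.integral_cong[OF refl f_indicator])
  finally show "(\<integral>\<omega>. p \<omega> \<partial>M) = measure M {\<omega>\<in>space M. P \<omega>}" .
qed

lemma min_compl_add_misclassification:
  fixes p q :: real
  shows "min p (1 - p) + \<bar>2 * p - 1\<bar> * (if (p > 1/2) \<noteq> (q > 1/2) then 1 else 0)
    = 1/2 - (if q > 1/2 then 1 else -1) * (p - 1/2)"
  by (auto simp: min_def abs_if)

lemma expectation_min_compl_add_expectation_misclassification:
  fixes p :: "'a \<Rightarrow> real"
  assumes M: "prob_space M" and p_meas: "p \<in> borel_measurable M"
    and p_bounded: "AE \<omega> in M. 0 \<le> p \<omega> \<and> p \<omega> \<le> 1"
    and p_mean: "(\<integral>\<omega>. p \<omega> \<partial>M) = q"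
  shows "(\<integral>\<omega>. min (p \<omega>) (1 - p \<omega>) \<partial>M) +
      (\<integral>\<omega>. \<bar>2 * p \<omega> - 1\<bar> * (if (p \<omega> > 1/2) \<noteq> (q > 1/2) then 1 else 0) \<partial>M)
    = min q (1 - q)"
proof -
  interpret prob_space M by (rule M)
  define s :: real where "s = (if q > 1/2 then 1 else -1)"
  have "AE \<omega> in M. norm (p \<omega>) \<le> 1 \<and> norm (min (p \<omega>) (1 - p \<omega>)) \<le> 1 \<and>
      norm (\<bar>2 * p \<omega> - 1\<bar> * (if (p \<omega> > 1/2) \<noteq> (q > 1/2) then 1 else 0 :: real)) \<le> 1"
    using p_bounded by eventually_elim auto
  then have p_int: "integrable M p"
    and "integrable M (\<lambda>\<omega>. min (p \<omega>) (1 - p \<omega>))"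
    and "integrable M (\<lambda>\<omega>. \<bar>2 * p \<omega> - 1\<bar> * (if (p \<omega> > 1/2) \<noteq> (q > 1/2) then 1 else 0 :: real))"
    using p_meas by (auto intro!: integrable_const_bound[where B=1] elim: eventually_mono)
  then have "(\<integral>\<omega>. min (p \<omega>) (1 - p \<omega>) \<partial>M) +
      (\<integral>\<omega>. \<bar>2 * p \<omega> - 1\<bar> * (if (p \<omega> > 1/2) \<noteq> (q > 1/2) then 1 else 0) \<partial>M)
      = (\<integral>\<omega>. min (p \<omega>) (1 - p \<omega>) +
          \<bar>2 * p \<omega> - 1\<bar> * (if (p \<omega> > 1/2) \<noteq> (q > 1/2) then 1 else 0) \<partial>M)"
    by (intro Bochner_Integration.integral_add[symmetric])
  also have "\<dots> = (\<integral>\<omega>. 1/2 - s * p \<omega> + s / 2 \<partial>M)"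
    unfolding min_compl_add_misclassification s_def by (simp add: algebra_simps)
  also have "\<dots> = 1/2 - s * q + s / 2"
    using p_int p_mean by (simp add: prob_space)
  also have "\<dots> = min q (1 - q)"
    by (auto simp: s_def min_def)
  finally show ?thesis .
qed

lemma integral_min_compl_add_integral_misclassification:
  fixes p :: "'x \<Rightarrow> 'a \<Rightarrow> real"
  assumes M: "prob_space M" and N: "finite_measure N"
    and p_meas: "(\<lambda>(x, \<omega>). p x \<omega>) \<in> borel_measurable (N \<Otimes>\<^sub>M M)"
    and p_bounded: "\<And>x. x \<in> space N \<Longrightarrow> AE \<omega> in M. 0 \<le> p x \<omega> \<and> p x \<omega> \<le> 1"
    and p_mean: "\<And>x. x \<in> space N \<Longrightarrow> (\<integral>\<omega>. p x \<omega> \<partial>M) = \<pi> x"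
  shows "(\<integral>\<omega>. (\<integral>x. min (p x \<omega>) (1 - p x \<omega>) \<partial>N) \<partial>M) +
      (\<integral>x. (\<integral>\<omega>. \<bar>2 * p x \<omega> - 1\<bar> * (if (p x \<omega> > 1/2) \<noteq> (\<pi> x > 1/2) then 1 else 0) \<partial>M) \<partial>N)
    = (\<integral>x. min (\<pi> x) (1 - \<pi> x) \<partial>N)"
proof -
  interpret M: prob_space M by fact
  interpret N: finite_measure N by fact
  interpret pair_sigma_finite N M ..
  interpret NM: finite_measure "N \<Otimes>\<^sub>M M"
    by (rule finite_measure_pair_measure) unfold_locales
  define u where "u = (\<lambda>(x, \<omega>). min (p x \<omega>) (1 - p x \<omega>))"
  define g where
    "g = (\<lambda>(x, \<omega>). \<bar>2 * p x \<omega> - 1\<bar> * (if (p x \<omega> > 1/2) \<noteq> (\<pi> x > 1/2) then 1 else 0 :: real))"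
  have "(\<lambda>x. \<integral>\<omega>. p x \<omega> \<partial>M) \<in> borel_measurable N"
    using M.borel_measurable_lebesgue_integral[OF p_meas] by simp
  then have \<pi>_meas: "\<pi> \<in> borel_measurable N"
    by (rule measurable_cong[THEN iffD1, rotated]) (simp add: p_mean)
  have "AE z in N \<Otimes>\<^sub>M M. 0 \<le> p (fst z) (snd z) \<and> p (fst z) (snd z) \<le> 1"
  proof (rule AE_pair_measure)
    show "{z \<in> space (N \<Otimes>\<^sub>M M). 0 \<le> p (fst z) (snd z) \<and> p (fst z) (snd z) \<le> 1} \<in> sets (N \<Otimes>\<^sub>M M)"
      using p_meas by (simp add: case_prod_beta) measurable
  qed (use p_bounded in \<open>auto intro: AE_I2\<close>)
  then have "AE z in N \<Otimes>\<^sub>M M. norm (u z) \<le> 1 \<and> norm (g z) \<le> 1"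
    by eventually_elim (auto simp: u_def g_def case_prod_beta)
  moreover have "u \<in> borel_measurable (N \<Otimes>\<^sub>M M)" "g \<in> borel_measurable (N \<Otimes>\<^sub>M M)"
    using p_meas \<pi>_meas unfolding u_def g_def case_prod_beta by measurable
  ultimately have u_int: "integrable (N \<Otimes>\<^sub>M M) u" and g_int: "integrable (N \<Otimes>\<^sub>M M) g"
    by (auto intro: NM.integrable_const_bound[where B=1] elim: AE_mp)
  have "(\<integral>\<omega>. (\<integral>x. u (x, \<omega>) \<partial>N) \<partial>M) + (\<integral>x. (\<integral>\<omega>. g (x, \<omega>) \<partial>M) \<partial>N)
      = (\<integral>x. (\<integral>\<omega>. u (x, \<omega>) \<partial>M) + (\<integral>\<omega>. g (x, \<omega>) \<partial>M) \<partial>N)"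
    using Fubini_integral[of "\<lambda>x \<omega>. u (x, \<omega>)"] u_int integrable_fst'[OF u_int] integrable_fst'[OF g_int]
    by simp
  also have "\<dots> = (\<integral>x. min (\<pi> x) (1 - \<pi> x) \<partial>N)"
  proof (rule Bochner_Integration.integral_cong[OF refl])
    fix x assume x: "x \<in> space N"
    have "p x \<in> borel_measurable M"
      using measurable_Pair2[OF p_meas x] by simp
    from expectation_min_compl_add_expectation_misclassification[OF M this p_bounded[OF x] p_mean[OF x]]
    show "(\<integral>\<omega>. u (x, \<omega>) \<partial>M) + (\<integral>\<omega>. g (x, \<omega>) \<partial>M) = min (\<pi> x) (1 - \<pi> x)"
      by (simp add: u_def g_def)
  qed
  finally show ?thesis
    by (simp add: u_def g_def)
qed

lemma set_integral_min_compl_add_set_integral_misclassification: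
  fixes X :: "'x::euclidean_space set" and p :: "'x \<Rightarrow> 'a \<Rightarrow> real"
  assumes M: "prob_space M" and X: "X \<in> lmeasurable"
    and p_meas: "(\<lambda>(\<omega>, x). p x \<omega>) \<in> borel_measurable (M \<Otimes>\<^sub>M lborel)"
    and p_bounded: "\<And>x. x \<in> X \<Longrightarrow> AE \<omega> in M. 0 \<le> p x \<omega> \<and> p x \<omega> \<le> 1"
    and p_mean: "\<And>x. x \<in> X \<Longrightarrow> (\<integral>\<omega>. p x \<omega> \<partial>M) = \<pi> x"
  shows "(\<integral>\<omega>. (LINT x:X|lebesgue. min (p x \<omega>) (1 - p x \<omega>)) \<partial>M) +
      (LINT x:X|lebesgue. (\<integral>\<omega>. \<bar>2 * p x \<omega> - 1\<bar> *
          indicator (symdiff {x\<in>X. p x \<omega> > 1/2} {x\<in>X. \<pi> x > 1/2}) x \<partial>M))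
    = (LINT x:X|lebesgue. min (\<pi> x) (1 - \<pi> x))"
proof -
  let ?N = "lebesgue_on X"
  have set_integral: "(LINT x:X|lebesgue. f x) = (\<integral>x. f x \<partial>?N)" for f :: "'x \<Rightarrow> real"
    using X by (simp add: set_lebesgue_integral_def integral_restrict_space)
  have space_N: "space ?N = X"
    by (simp add: space_restrict_space)
  have "(\<lambda>z. (snd z, fst z)) \<in> ?N \<Otimes>\<^sub>M M \<rightarrow>\<^sub>M M \<Otimes>\<^sub>M lborel"
    using measurable_compose[OF measurable_fst id_borel_measurable_lebesgue_on[of X]]
    by (intro measurable_Pair measurable_snd) (simp add: o_def measurable_lborel2)
  from measurable_comp[OF this p_meas]
  have "(\<lambda>(x, \<omega>). p x \<omega>) \<in> borel_measurable (?N \<Otimes>\<^sub>M M)"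
    by (simp add: o_def case_prod_beta)
  from integral_min_compl_add_integral_misclassification[OF M finite_measure_lebesgue_on[OF X] this]
  have "(\<integral>\<omega>. (\<integral>x. min (p x \<omega>) (1 - p x \<omega>) \<partial>?N) \<partial>M) +
      (\<integral>x. (\<integral>\<omega>. \<bar>2 * p x \<omega> - 1\<bar> * (if (p x \<omega> > 1/2) \<noteq> (\<pi> x > 1/2) then 1 else 0) \<partial>M) \<partial>?N)
    = (\<integral>x. min (\<pi> x) (1 - \<pi> x) \<partial>?N)"
    using p_bounded p_mean by (simp add: space_N)
  moreover have "(\<integral>x. (\<integral>\<omega>. \<bar>2 * p x \<omega> - 1\<bar> *
          indicator (symdiff {x\<in>X. p x \<omega> > 1/2} {x\<in>X. \<pi> x > 1/2}) x \<partial>M) \<partial>?N)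
    = (\<integral>x. (\<integral>\<omega>. \<bar>2 * p x \<omega> - 1\<bar> * (if (p x \<omega> > 1/2) \<noteq> (\<pi> x > 1/2) then 1 else 0) \<partial>M) \<partial>?N)"
    by (intro Bochner_Integration.integral_cong refl) (auto simp: space_N symdiff_def indicator_def)
  ultimately show ?thesis
    by (simp only: set_integral)
qed

lemma argmin_set_eq_argmax_set_if_sum_const:
  assumes "\<And>u. u \<in> A \<Longrightarrow> J u + G u = (c::real)"
  shows "argmin_set J A = argmax_set G A"
proof -
  have "J u \<le> J v \<longleftrightarrow> G v \<le> G u" if "u \<in> A" "v \<in> A" for u v
    using assms[OF that(1)] assms[OF that(2)] by linarith
  then show ?thesis
    unfolding argmin_set_def argmax_set_def by auto
qed

theorem proposition4p1:
  fixes X :: "(real^'dx) set" and S :: "(real^'ds) set"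
    and PS :: "(real^'ds) measure"
    and C :: "(real^'q) set" and \<alpha> :: real
    and M :: "'a measure"
    and \<xi> :: "'a \<Rightarrow> ((real^'dx) \<times> (real^'ds)) \<Rightarrow> real^'q"
    and m :: "((real^'dx) \<times> (real^'ds)) \<Rightarrow> real^'q"
    and k :: "((real^'dx) \<times> (real^'ds)) \<Rightarrow> ((real^'dx) \<times> (real^'ds)) \<Rightarrow> real^'q^'q"
    and \<Sigma> :: "real^'q^'q"
    and r :: nat
    and \<epsilon> :: "nat \<Rightarrow> 'a \<Rightarrow> real^'q"
    and pin :: "(nat \<Rightarrow> (real^'dx) \<times> (real^'ds)) \<Rightarrow> real^'dx \<Rightarrow> 'a \<Rightarrow> real"
  assumes bX: "bounded X" and bS: "bounded S"
    and X_meas: "X \<in> sets lebesgue"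
    and PS: "prob_space PS" "sets PS = sets (restrict_space borel S)"
    and C_meas: "C \<in> sets borel"
    and alpha: "0 < \<alpha>" "\<alpha> < 1"
    and r: "1 \<le> r"
    and M: "prob_space M"
    and xi_meas: "(\<lambda>(\<omega>, t). \<xi> \<omega> t) \<in> borel_measurable (M \<Otimes>\<^sub>M restrict_space borel (X \<times> S))"
    and GP: "gaussian_process M (aug_field \<xi> \<epsilon>) (Inl ` (X \<times> S) \<union> Inr ` {..<r})
               (aug_mean m) (aug_cov k \<Sigma>)"
    and pin_meas: "\<And>u. u \<in> {..<r} \<rightarrow>\<^sub>E X \<times> S \<Longrightarrow>
               (\<lambda>(\<omega>, x). pin u x \<omega>) \<in> borel_measurable (M \<Otimes>\<^sub>M lborel)"
    and pin_version: "\<And>u x. u \<in> {..<r} \<rightarrow>\<^sub>E X \<times> S \<Longrightarrow> x \<in> X \<Longrightarrow>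
               AE \<omega> in M. pin u x \<omega> =
                 real_cond_exp M (obs_algebra M \<xi> \<epsilon> r u)
                   (\<lambda>\<omega>'. if x \<in> quantile_set X PS C \<alpha> (\<xi> \<omega>') then 1 else 0) \<omega>"
  shows
    "let \<pi>n = (\<lambda>x. measure M {\<omega> \<in> space M. x \<in> quantile_set X PS C \<alpha> (\<xi> \<omega>)});
         \<Gamma>Bn = {x \<in> X. \<pi>n x > 1/2};
         \<Gamma>Bnr = (\<lambda>u \<omega>. {x \<in> X. pin u x \<omega> > 1/2});
         J = (\<lambda>u. \<integral>\<omega>. (LINT x:X|lebesgue. min (pin u x \<omega>) (1 - pin u x \<omega>)) \<partial>M);
         G = (\<lambda>u. LINT x:X|lebesgue.
                (\<integral>\<omega>. \<bar>2 * pin u x \<omega> - 1\<bar> * indicator (symdiff (\<Gamma>Bnr u \<omega>) \<Gamma>Bn) x \<partial>M))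
     in argmin_set J ({..<r} \<rightarrow>\<^sub>E X \<times> S) = argmax_set G ({..<r} \<rightarrow>\<^sub>E X \<times> S)"
proof -
  define \<pi>n where "\<pi>n x = measure M {\<omega> \<in> space M. x \<in> quantile_set X PS C \<alpha> (\<xi> \<omega>)}" for x
  have X_lmeas: "X \<in> lmeasurable"
    using bX X_meas by (rule bounded_set_imp_lmeasurable)
  have \<epsilon>_meas: "\<epsilon> j \<in> borel_measurable M" if "j < r" for j
    using gaussian_process_measurable[OF GP, of "Inr j"] that by (simp add: aug_field_def)
  show ?thesis
    unfolding Let_def \<pi>n_def[symmetric]
  proof (rule argmin_set_eq_argmax_set_if_sum_const)
    fix u assume u: "u \<in> {..<r} \<rightarrow>\<^sub>E X \<times> S"
    have "(\<lambda>\<omega>. \<xi> \<omega> (u j)) \<in> borel_measurable M" if "j < r" for j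
      using measurable_Pair1[OF xi_meas, of "u j"] u that by (simp add: space_restrict_space PiE_iff)
    with M \<epsilon>_meas have F: "sigma_finite_subalgebra M (obs_algebra M \<xi> \<epsilon> r u)"
      by (intro sigma_finite_subalgebra_obs_algebra)
    have "pin u x \<in> borel_measurable M" for x
      using measurable_Pair1[OF pin_meas[OF u]] by simp
    note pin_cond_prob = cond_prob_version[OF F M
        quantile_set_event_measurable[OF xi_meas PS C_meas] this pin_version[OF u]]
    show "(\<integral>\<omega>. (LINT x:X|lebesgue. min (pin u x \<omega>) (1 - pin u x \<omega>)) \<partial>M) +
        (LINT x:X|lebesgue. (\<integral>\<omega>. \<bar>2 * pin u x \<omega> - 1\<bar> *
          indicator (symdiff {x\<in>X. pin u x \<omega> > 1/2} {x\<in>X. \<pi>n x > 1/2}) x \<partial>M))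
      = (LINT x:X|lebesgue. min (\<pi>n x) (1 - \<pi>n x))"
      using pin_cond_prob by (intro set_integral_min_compl_add_set_integral_misclassification
          [OF M X_lmeas pin_meas[OF u]]) (simp_all add: \<pi>n_def)
  qed
qed

end
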